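(* Let $\mathcal{P}$ be a grid polyomino with holes $\mathcal{H}_{ij}=[a_{ij},b_{ij}]$, $i\in[r]$, $j\in[s]$, and toric ideal $J_{\mathcal{P}}$. Let $f=f^+-f^-\in J_{\mathcal{P}}$ be a binomial, $V_+=\{v\in V(\mathcal{P}): x_v\mid f^+\}$, $V_-=\{v\in V(\mathcal{P}): x_v\mid f^-\}$. If $v\in V_+\cap\mathcal{L}_{i,j}$ for some $i\in[r]$, $j\in[s]$, then there exists $v'\in V_-\cap\mathcal{L}_{i,j}$.
   Context: A cell is $[a,a+(1,1)]$, $a\in\mathbb{N}^2$, with vertices $a,a+(1,0),a+(0,1),a+(1,1)$; a polyomino is a finite nonempty set of cells, any two joined by a sequence of cells in it with consecutive ones sharing an edge; $V(\mathcal{P})$ is the set of vertices of its cells; $S=\mathbb{K}[x_v\mid v\in V(\mathcal{P})]$, $\mathbb{K}$ a field. For $a=(a_1,a_2)\le b=(b_1,b_2)$ componentwise, $[a,b]=\{(p,q): a_1\le p\le b_1, a_2\le q\le b_2\}$. Grid polyomino: let $m,n\ge1$, $r,s\ge1$, and for $i\in[r]$, $j\in[s]$ let $a_{ij},b_{ij}\in\mathbb{N}^2$ with $1<(a_{ij})_1<(b_{ij})_1<m$, $1<(a_{ij})_2<(b_{ij})_2<n$, such that (1) for each $i$, $(a_{i\ell})_1=(a_{ik})_1$ and $(b_{i\ell})_1=(b_{ik})_1$ for all $\ell,k\in[s]$; (2) for each $j$, $(a_{\ell j})_2=(a_{kj})_2$ and $(b_{\ell j})_2=(b_{kj})_2$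 for all $\ell,k\in[r]$; (3) $(a_{i+1,j})_1=(b_{ij})_1+1$ for $i\in[r-1]$ and $(a_{i,j+1})_2=(b_{ij})_2+1$ for $j\in[s-1]$. The grid polyomino $\mathcal{P}$ is the set of cells of $[(1,1),(m,n)]$ not contained in any $\mathcal{H}_{ij}=[a_{ij},b_{ij}]$; the holes of $\mathcal{P}$ are the sets of cells of the $\mathcal{H}_{ij}$, with lower left corner $a_{ij}$. Toric ideal: set $\mathcal{F}_{i,j}=\{(x,y)\in V(\mathcal{P}): x\le (a_{ij})_1,\ y\le (a_{ij})_2\}$. A horizontal edge interval is a set $\{(t,y):p\le t\le q\}$ with each $\{(t,y),(t+1,y)\}$, $p\le t<q$, an edge of a cell of $\mathcal{P}$; maximal if not strictly contained in another; vertical analogously. Each $a\in V(\mathcal{P})$ lies in a unique maximal horizontal edge interval $H(a)$ and maximal vertical one $V(a)$. With variables $h_H,v_V$ for maximal edge intervals and $w_{i,j}$, define $\varphi(x_a)=h_{H(a)}v_{V(a)}\prod_{(i,j):a\in\mathcal{F}_{i,j}}w_{i,j}$; $J_{\mathcal{P}}=\ker\varphi$. Finally $\mathcal{L}_{i,j}=\mathcal{F}_{i,j}\setminus\bigcup\{\mathcal{F}_{k,h}: k\le i,\ h\le j,\ (k,h)\ne(i,j)\}$. *)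

theory Defs
  imports Main "HOL-Library.Poly_Mapping"
begin

(* Points of N^2 are pairs of naturals. A cell [c, c+(1,1)] is represented by its
   lower left corner c; a polyomino by the set of lower left corners of its cells. *)

definition cell_vertices :: "nat \<times> nat \<Rightarrow> (nat \<times> nat) set" where
  "cell_vertices c = {c, (fst c + 1, snd c), (fst c, snd c + 1), (fst c + 1, snd c + 1)}"

definition cell_edges :: "nat \<times> nat \<Rightarrow> (nat \<times> nat) set set" where
  "cell_edges c = {{c, (fst c + 1, snd c)}, {(fst c, snd c + 1), (fst c + 1, snd c + 1)},
                   {c, (fst c, snd c + 1)}, {(fst c + 1, snd c), (fst c + 1, snd c + 1)}}"

definition poly_vertices :: "(nat \<times> nat) set \<Rightarrow> (nat \<times> nat) set" where
  "poly_vertices P = (\<Union>c\<in>P. cell_vertices c)"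

definition is_edge_of :: "(nat \<times> nat) set \<Rightarrow> (nat \<times> nat) set \<Rightarrow> bool" where
  "is_edge_of P e \<longleftrightarrow> (\<exists>c\<in>P. e \<in> cell_edges c)"

definition horiz_edge_interval :: "(nat \<times> nat) set \<Rightarrow> (nat \<times> nat) set \<Rightarrow> bool" where
  "horiz_edge_interval P I \<longleftrightarrow> (\<exists>p q y. p \<le> q \<and> I = {(t, y) | t. p \<le> t \<and> t \<le> q} \<and>
      (\<forall>t. p \<le> t \<and> t < q \<longrightarrow> is_edge_of P {(t, y), (t + 1, y)}))"

definition vert_edge_interval :: "(nat \<times> nat) set \<Rightarrow> (nat \<times> nat) set \<Rightarrow> bool" where
  "vert_edge_interval P I \<longleftrightarrow> (\<exists>p q x. p \<le> q \<and> I = {(x, t) | t. p \<le> t \<and> t \<le> q} \<and>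
      (\<forall>t. p \<le> t \<and> t < q \<longrightarrow> is_edge_of P {(x, t), (x, t + 1)}))"

definition max_horiz_edge_interval :: "(nat \<times> nat) set \<Rightarrow> (nat \<times> nat) set \<Rightarrow> bool" where
  "max_horiz_edge_interval P I \<longleftrightarrow> horiz_edge_interval P I \<and>
      \<not> (\<exists>J. horiz_edge_interval P J \<and> I \<subset> J)"

definition max_vert_edge_interval :: "(nat \<times> nat) set \<Rightarrow> (nat \<times> nat) set \<Rightarrow> bool" where
  "max_vert_edge_interval P I \<longleftrightarrow> vert_edge_interval P I \<and>
      \<not> (\<exists>J. vert_edge_interval P J \<and> I \<subset> J)"

definition Hint :: "(nat \<times> nat) set \<Rightarrow> nat \<times> nat \<Rightarrow> (nat \<times> nat) set" where
  "Hint P v = (THE I. max_horiz_edge_interval P I \<and> v \<in> I)"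

definition Vint :: "(nat \<times> nat) set \<Rightarrow> nat \<times> nat \<Rightarrow> (nat \<times> nat) set" where
  "Vint P v = (THE I. max_vert_edge_interval P I \<and> v \<in> I)"

definition cell_in :: "nat \<times> nat \<Rightarrow> nat \<times> nat \<Rightarrow> nat \<times> nat \<Rightarrow> bool" where
  "cell_in c p q \<longleftrightarrow> fst p \<le> fst c \<and> fst c + 1 \<le> fst q \<and> snd p \<le> snd c \<and> snd c + 1 \<le> snd q"

(* grid polyomino data: m n r s, holes [A i j, B i j] for i in [r], j in [s] *)
definition grid_data :: "nat \<Rightarrow> nat \<Rightarrow> nat \<Rightarrow> nat \<Rightarrow> (nat \<Rightarrow> nat \<Rightarrow> nat \<times> nat)
    \<Rightarrow> (nat \<Rightarrow> nat \<Rightarrow> nat \<times> nat) \<Rightarrow> bool" where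
  "grid_data m n r s A B \<longleftrightarrow> 1 \<le> m \<and> 1 \<le> n \<and> 1 \<le> r \<and> 1 \<le> s \<and>
     (\<forall>i\<in>{1..r}. \<forall>j\<in>{1..s}. 1 < fst (A i j) \<and> fst (A i j) < fst (B i j) \<and> fst (B i j) < m \<and>
                              1 < snd (A i j) \<and> snd (A i j) < snd (B i j) \<and> snd (B i j) < n) \<and>
     (\<forall>i\<in>{1..r}. \<forall>l\<in>{1..s}. \<forall>k\<in>{1..s}. fst (A i l) = fst (A i k) \<and> fst (B i l) = fst (B i k)) \<and>
     (\<forall>j\<in>{1..s}. \<forall>l\<in>{1..r}. \<forall>k\<in>{1..r}. snd (A l j) = snd (A k j) \<and> snd (B l j) = snd (B k j)) \<and>
     (\<forall>i\<in>{1..<r}. \<forall>j\<in>{1..s}. fst (A (i + 1) j) = fst (B i j) + 1) \<and>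
     (\<forall>i\<in>{1..r}. \<forall>j\<in>{1..<s}. snd (A i (j + 1)) = snd (B i j) + 1)"

definition grid_polyomino :: "nat \<Rightarrow> nat \<Rightarrow> nat \<Rightarrow> nat \<Rightarrow> (nat \<Rightarrow> nat \<Rightarrow> nat \<times> nat)
    \<Rightarrow> (nat \<Rightarrow> nat \<Rightarrow> nat \<times> nat) \<Rightarrow> (nat \<times> nat) set" where
  "grid_polyomino m n r s A B = {c. cell_in c (1, 1) (m, n) \<and>
      \<not> (\<exists>i\<in>{1..r}. \<exists>j\<in>{1..s}. cell_in c (A i j) (B i j))}"

definition Fset :: "(nat \<times> nat) set \<Rightarrow> (nat \<Rightarrow> nat \<Rightarrow> nat \<times> nat) \<Rightarrow> nat \<Rightarrow> nat \<Rightarrow> (nat \<times> nat) set" where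
  "Fset P A i j = {v \<in> poly_vertices P. fst v \<le> fst (A i j) \<and> snd v \<le> snd (A i j)}"

definition Lset :: "(nat \<times> nat) set \<Rightarrow> (nat \<Rightarrow> nat \<Rightarrow> nat \<times> nat) \<Rightarrow> nat \<Rightarrow> nat \<Rightarrow> (nat \<times> nat) set" where
  "Lset P A i j = Fset P A i j -
     (\<Union>{Fset P A k h | k h. k \<in> {1..i} \<and> h \<in> {1..j} \<and> (k, h) \<noteq> (i, j)})"

(* Polynomials: K[x_v] as (monomial exponent \<Rightarrow>0 coefficient) *)
type_synonym 'k vpoly = "((nat \<times> nat) \<Rightarrow>\<^sub>0 nat) \<Rightarrow>\<^sub>0 'k"

(* variables of the target ring K[h_H, v_V, w_ij] *)
datatype tvar = HVar "(nat \<times> nat) set" | VVar "(nat \<times> nat) set" | WVar nat nat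

type_synonym 'k tpoly = "(tvar \<Rightarrow>\<^sub>0 nat) \<Rightarrow>\<^sub>0 'k"

definition var :: "'v \<Rightarrow> ('v \<Rightarrow>\<^sub>0 nat) \<Rightarrow>\<^sub>0 'k::comm_ring_1" where
  "var x = Poly_Mapping.single (Poly_Mapping.single x 1) 1"

definition monom :: "('v \<Rightarrow>\<^sub>0 nat) \<Rightarrow> ('v \<Rightarrow>\<^sub>0 nat) \<Rightarrow>\<^sub>0 'k::comm_ring_1" where
  "monom u = Poly_Mapping.single u 1"

definition const :: "'k \<Rightarrow> ('v \<Rightarrow>\<^sub>0 nat) \<Rightarrow>\<^sub>0 'k::comm_ring_1" where
  "const c = Poly_Mapping.single 0 c"

(* the polynomial ring S = K[x_v | v \<in> V(P)] as a subset *)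
definition in_S :: "(nat \<times> nat) set \<Rightarrow> 'k::comm_ring_1 vpoly \<Rightarrow> bool" where
  "in_S V f \<longleftrightarrow> (\<forall>\<alpha>\<in>Poly_Mapping.keys f. Poly_Mapping.keys \<alpha> \<subseteq> V)"

definition phi_var :: "nat \<Rightarrow> nat \<Rightarrow> (nat \<times> nat) set \<Rightarrow> (nat \<Rightarrow> nat \<Rightarrow> nat \<times> nat)
     \<Rightarrow> nat \<times> nat \<Rightarrow> 'k::comm_ring_1 tpoly" where
  "phi_var r s P A v = var (HVar (Hint P v)) * var (VVar (Vint P v)) *
      (\<Prod>ij\<in>{ij. fst ij \<in> {1..r} \<and> snd ij \<in> {1..s} \<and> v \<in> Fset P A (fst ij) (snd ij)}.
          var (WVar (fst ij) (snd ij)))"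

definition phi :: "nat \<Rightarrow> nat \<Rightarrow> (nat \<times> nat) set \<Rightarrow> (nat \<Rightarrow> nat \<Rightarrow> nat \<times> nat)
     \<Rightarrow> 'k::comm_ring_1 vpoly \<Rightarrow> 'k tpoly" where
  "phi r s P A f = (\<Sum>\<alpha>\<in>Poly_Mapping.keys f. const (Poly_Mapping.lookup f \<alpha>) *
        (\<Prod>v\<in>Poly_Mapping.keys \<alpha>. phi_var r s P A v ^ Poly_Mapping.lookup \<alpha> v))"

definition toric_ideal :: "nat \<Rightarrow> nat \<Rightarrow> (nat \<times> nat) set \<Rightarrow> (nat \<Rightarrow> nat \<Rightarrow> nat \<times> nat)
     \<Rightarrow> 'k::comm_ring_1 vpoly set" where
  "toric_ideal r s P A = {f. in_S (poly_vertices P) f \<and> phi r s P A f = 0}"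

end

theory Submission
  imports Defs
begin

(* The map phi sends x_v to a monomial in which w_{k,h} occurs exactly when v lies in F_{k,h}.
   Hence if x^u - x^w lies in J_P, the monomials x^u and x^w have the same degree in the
   variables of every F_{k,h}. Degree in a set of variables is a modular set function, and in a
   grid polyomino the sets F_{k,h} are closed under intersection (their corners form a product
   of two increasing sequences), so by inclusion-exclusion x^u and x^w also have the same degree
   in the union of the F_{k,h} with (k,h) < (i,j), hence in L_{i,j}. That degree is positive
   for x^u, which is divisible by x_v, so some variable of x^w lies in L_{i,j}. *)

lemma monom_zero [simp]: "monom 0 = 1"
  by (simp add: monom_def)

lemma monom_add: "monom (a + b) = monom a * monom b"
  by (simp add: monom_def mult_single)

lemma monom_sum: "monom (\<Sum>x\<in>S. e x) = (\<Prod>x\<in>S. monom (e x))"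
proof (induction S rule: infinite_finite_induct)
  case (insert x S)
  then show ?case by (simp add: monom_add)
qed simp_all

lemma monom_power: "monom a ^ n = monom (\<Sum>_<n. a)"
  by (simp add: monom_sum)

lemma monom_inject:
  "(monom a :: ('v \<Rightarrow>\<^sub>0 nat) \<Rightarrow>\<^sub>0 'k::comm_ring_1) = monom b \<longleftrightarrow> a = b"
  by (metis monom_def lookup_single_eq lookup_single_not_eq zero_neq_one)

lemma var_eq_monom: "var x = monom (Poly_Mapping.single x 1)"
  by (simp add: var_def monom_def)

lemma var_dvd_monom_iff:
  "(var v :: ('v \<Rightarrow>\<^sub>0 nat) \<Rightarrow>\<^sub>0 'k::comm_ring_1) dvd monom u \<longleftrightarrow> v \<in> Poly_Mapping.keys u"
proof
  assume "var v dvd (monom u :: ('v \<Rightarrow>\<^sub>0 nat) \<Rightarrow>\<^sub>0 'k)"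
  then obtain g where g: "monom u = (var v :: ('v \<Rightarrow>\<^sub>0 nat) \<Rightarrow>\<^sub>0 'k) * g" by (elim dvdE)
  have "u \<in> Poly_Mapping.keys (monom u :: ('v \<Rightarrow>\<^sub>0 nat) \<Rightarrow>\<^sub>0 'k)"
    by (simp add: monom_def)
  then obtain b where "u = Poly_Mapping.single v 1 + b"
    using keys_mult[of "var v :: ('v \<Rightarrow>\<^sub>0 nat) \<Rightarrow>\<^sub>0 'k" g] by (auto simp: g var_def)
  then show "v \<in> Poly_Mapping.keys u"
    by (simp add: in_keys_iff lookup_add)
next
  assume "v \<in> Poly_Mapping.keys u"
  then have "u = Poly_Mapping.single v 1 + (u - Poly_Mapping.single v 1)"
    by (intro poly_mapping_eqI) (auto simp: lookup_add lookup_minus lookup_single in_keys_iff when_def)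
  then have "monom u = var v * (monom (u - Poly_Mapping.single v 1) :: ('v \<Rightarrow>\<^sub>0 nat) \<Rightarrow>\<^sub>0 'k)"
    by (metis monom_add var_eq_monom)
  then show "var v dvd (monom u :: ('v \<Rightarrow>\<^sub>0 nat) \<Rightarrow>\<^sub>0 'k)" by simp
qed

definition degree_in :: "('v \<Rightarrow>\<^sub>0 nat) \<Rightarrow> 'v set \<Rightarrow> nat" where
  "degree_in u S = (\<Sum>v\<in>Poly_Mapping.keys u \<inter> S. Poly_Mapping.lookup u v)"

lemma degree_in_empty [simp]: "degree_in u {} = 0"
  by (simp add: degree_in_def)

lemma degree_in_union_inter:
  "degree_in u (S \<union> T) + degree_in u (S \<inter> T) = degree_in u S + degree_in u T"
proof -
  have "Poly_Mapping.keys u \<inter> (S \<union> T) = (Poly_Mapping.keys u \<inter> S) \<union> (Poly_Mapping.keys u \<inter> T)"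
    and "Poly_Mapping.keys u \<inter> (S \<inter> T) = (Poly_Mapping.keys u \<inter> S) \<inter> (Poly_Mapping.keys u \<inter> T)"
    by blast+
  then show ?thesis
    unfolding degree_in_def by (simp add: sum.union_inter)
qed

lemma degree_in_diff:
  assumes "T \<subseteq> S"
  shows "degree_in u (S - T) = degree_in u S - degree_in u T"
proof -
  have "Poly_Mapping.keys u \<inter> (S - T) = (Poly_Mapping.keys u \<inter> S) - (Poly_Mapping.keys u \<inter> T)"
    and "Poly_Mapping.keys u \<inter> T \<subseteq> Poly_Mapping.keys u \<inter> S"
    using assms by blast+
  then show ?thesis
    unfolding degree_in_def by (simp add: sum_diff_nat)
qed

lemma degree_in_pos_iff: "0 < degree_in u S \<longleftrightarrow> Poly_Mapping.keys u \<inter> S \<noteq> {}"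
proof -
  have "degree_in u S = 0 \<longleftrightarrow> Poly_Mapping.keys u \<inter> S = {}"
    unfolding degree_in_def by (auto simp: sum_eq_0_iff in_keys_iff)
  then show ?thesis
    using neq0_conv by blast
qed

lemma modular_eq_on_finite_Union:
  fixes \<mu> \<nu> :: "'a set \<Rightarrow> 'b::cancel_comm_monoid_add"
  assumes \<mu>: "\<And>S T. \<mu> (S \<union> T) + \<mu> (S \<inter> T) = \<mu> S + \<mu> T"
    and \<nu>: "\<And>S T. \<nu> (S \<union> T) + \<nu> (S \<inter> T) = \<nu> S + \<nu> T"
    and empty: "\<mu> {} = \<nu> {}"
    and closed: "\<And>X Y. X \<in> \<F> \<Longrightarrow> Y \<in> \<F> \<Longrightarrow> X \<inter> Y \<in> \<F>"
    and agree: "\<And>X. X \<in> \<F> \<Longrightarrow> \<mu> X = \<nu> X"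
    and "finite \<G>" "\<G> \<subseteq> \<F>"
  shows "\<mu> (\<Union>\<G>) = \<nu> (\<Union>\<G>)"
  using \<open>finite \<G>\<close> \<open>\<G> \<subseteq> \<F>\<close>
proof (induction "card \<G>" arbitrary: \<G> rule: less_induct)
  case less
  show ?case
  proof (cases "\<G> = {}")
    case True
    then show ?thesis using empty by simp
  next
    case False
    then obtain X where X: "X \<in> \<G>" by blast
    define \<R> where "\<R> = \<G> - {X}"
    have card_\<R>: "card \<R> < card \<G>"
      unfolding \<R>_def using less.prems(1) X by (rule card_Diff1_less)
    have rest: "\<mu> (\<Union>\<R>) = \<nu> (\<Union>\<R>)"
      using card_\<R> less by (auto simp: \<R>_def)
    have "\<mu> (\<Union>((\<inter>) X ` \<R>)) = \<nu> (\<Union>((\<inter>) X ` \<R>))"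
    proof (rule less.hyps)
      show "card ((\<inter>) X ` \<R>) < card \<G>"
        using card_image_le[of \<R> "(\<inter>) X"] card_\<R> less.prems(1) by (simp add: \<R>_def)
      show "(\<inter>) X ` \<R> \<subseteq> \<F>"
        using X less.prems(2) closed by (auto simp: \<R>_def)
    qed (use less.prems(1) in \<open>simp add: \<R>_def\<close>)
    moreover have "\<Union>((\<inter>) X ` \<R>) = X \<inter> \<Union>\<R>" and "\<Union>\<G> = X \<union> \<Union>\<R>"
      using X by (auto simp: \<R>_def)
    ultimately have "\<mu> (\<Union>\<G>) + \<mu> (X \<inter> \<Union>\<R>) = \<nu> (\<Union>\<G>) + \<mu> (X \<inter> \<Union>\<R>)"
      using \<mu>[of X "\<Union>\<R>"] \<nu>[of X "\<Union>\<R>"] rest agree[of X] X less.prems(2) by auto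
    then show ?thesis by simp
  qed
qed

definition phi_exponent :: "nat \<Rightarrow> nat \<Rightarrow> (nat \<times> nat) set \<Rightarrow> (nat \<Rightarrow> nat \<Rightarrow> nat \<times> nat)
    \<Rightarrow> nat \<times> nat \<Rightarrow> tvar \<Rightarrow>\<^sub>0 nat" where
  "phi_exponent r s P A v = Poly_Mapping.single (HVar (Hint P v)) 1 + Poly_Mapping.single (VVar (Vint P v)) 1 +
      (\<Sum>ij\<in>{ij. fst ij \<in> {1..r} \<and> snd ij \<in> {1..s} \<and> v \<in> Fset P A (fst ij) (snd ij)}.
          Poly_Mapping.single (WVar (fst ij) (snd ij)) 1)"

lemma phi_var_eq_monom: "phi_var r s P A v = monom (phi_exponent r s P A v)"
  by (simp add: phi_var_def phi_exponent_def var_eq_monom monom_add monom_sum)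

lemma lookup_phi_exponent_WVar:
  assumes "k \<in> {1..r}" "h \<in> {1..s}"
  shows "Poly_Mapping.lookup (phi_exponent r s P A v) (WVar k h) = (if v \<in> Fset P A k h then 1 else 0)"
proof -
  let ?W = "{ij. fst ij \<in> {1..r} \<and> snd ij \<in> {1..s} \<and> v \<in> Fset P A (fst ij) (snd ij)}"
  have "finite ?W"
    by (rule finite_subset[of _ "{1..r} \<times> {1..s}"]) auto
  have "Poly_Mapping.lookup (\<Sum>ij\<in>?W. Poly_Mapping.single (WVar (fst ij) (snd ij)) (1::nat)) (WVar k h)
      = (\<Sum>ij\<in>?W. if ij = (k, h) then 1 else 0)"
    by (auto simp: lookup_sum lookup_single intro!: sum.cong)
  also have "\<dots> = (if (k, h) \<in> ?W then 1 else 0)"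
    using \<open>finite ?W\<close> by (simp add: sum.delta')
  finally show ?thesis
    using assms by (simp add: phi_exponent_def lookup_add lookup_single)
qed

definition phi_monom_exponent :: "nat \<Rightarrow> nat \<Rightarrow> (nat \<times> nat) set \<Rightarrow> (nat \<Rightarrow> nat \<Rightarrow> nat \<times> nat)
    \<Rightarrow> ((nat \<times> nat) \<Rightarrow>\<^sub>0 nat) \<Rightarrow> tvar \<Rightarrow>\<^sub>0 nat" where
  "phi_monom_exponent r s P A u = (\<Sum>v\<in>Poly_Mapping.keys u. \<Sum>_<Poly_Mapping.lookup u v. phi_exponent r s P A v)"

lemma phi_monom:
  "(phi r s P A (monom u) :: 'k::comm_ring_1 tpoly) = monom (phi_monom_exponent r s P A u)"
  by (simp add: phi_def phi_monom_exponent_def monom_def[of u] const_def phi_var_eq_monom monom_power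
      monom_sum[symmetric])

lemma lookup_phi_monom_exponent_WVar:
  assumes "k \<in> {1..r}" "h \<in> {1..s}"
  shows "Poly_Mapping.lookup (phi_monom_exponent r s P A u) (WVar k h) = degree_in u (Fset P A k h)"
  using assms
  by (simp add: phi_monom_exponent_def lookup_sum lookup_phi_exponent_WVar degree_in_def
      sum.inter_restrict if_distrib cong: if_cong)

lemma phi_monom_diff:
  assumes "u \<noteq> w"
  shows "(phi r s P A (monom u - monom w) :: 'k::comm_ring_1 tpoly)
    = phi r s P A (monom u) - phi r s P A (monom w)"
proof -
  let ?f = "monom u - monom w :: 'k vpoly"
  have "Poly_Mapping.keys ?f = {u, w}"
    and "Poly_Mapping.lookup ?f u = 1" "Poly_Mapping.lookup ?f w = -1"
    using assms by (auto simp: monom_def in_keys_iff lookup_minus lookup_single)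
  moreover have "const (-1) = (-1 :: 'k tpoly)"
    by (simp add: const_def single_uminus)
  ultimately show ?thesis
    using assms by (simp add: phi_def monom_def[of u] monom_def[of w] const_def)
qed

lemma toric_binomial_degree_in_Fset_eq:
  assumes "(monom u - monom w :: 'k::comm_ring_1 vpoly) \<in> toric_ideal r s P A"
    and "k \<in> {1..r}" "h \<in> {1..s}"
  shows "degree_in u (Fset P A k h) = degree_in w (Fset P A k h)"
proof (cases "u = w")
  case False
  have "(phi r s P A (monom u - monom w) :: 'k tpoly) = 0"
    using assms(1) by (simp add: toric_ideal_def)
  then have "(phi r s P A (monom u) :: 'k tpoly) = phi r s P A (monom w)"
    by (simp add: phi_monom_diff[OF False])
  then have "(monom (phi_monom_exponent r s P A u) :: 'k tpoly) = monom (phi_monom_exponent r s P A w)"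
    by (simp only: phi_monom)
  then have exp_eq: "phi_monom_exponent r s P A u = phi_monom_exponent r s P A w"
    by (simp only: monom_inject)
  have "degree_in u (Fset P A k h) = Poly_Mapping.lookup (phi_monom_exponent r s P A u) (WVar k h)"
    by (rule lookup_phi_monom_exponent_WVar[OF assms(2,3), symmetric])
  also have "\<dots> = degree_in w (Fset P A k h)"
    unfolding exp_eq by (rule lookup_phi_monom_exponent_WVar[OF assms(2,3)])
  finally show ?thesis .
qed simp

lemma grid_corner_fst_step:
  assumes grid: "grid_data m n r s A B" and i: "i \<in> {1..<r}" and j: "j \<in> {1..s}"
  shows "fst (A i j) < fst (A (Suc i) j)"
proof -
  have "i \<in> {1..r}"
    using i by simp
  then have "fst (A i j) < fst (B i j)"
    using grid j unfolding grid_data_def by blast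
  moreover have "fst (A (i + 1) j) = fst (B i j) + 1"
    using grid i j unfolding grid_data_def by blast
  ultimately show ?thesis by simp
qed

lemma grid_corner_snd_step:
  assumes grid: "grid_data m n r s A B" and i: "i \<in> {1..r}" and j: "j \<in> {1..<s}"
  shows "snd (A i j) < snd (A i (Suc j))"
proof -
  have "j \<in> {1..s}"
    using j by simp
  then have "snd (A i j) < snd (B i j)"
    using grid i unfolding grid_data_def by blast
  moreover have "snd (A i (j + 1)) = snd (B i j) + 1"
    using grid i j unfolding grid_data_def by blast
  ultimately show ?thesis by simp
qed

lemma grid_corner_fst_mono:
  assumes grid: "grid_data m n r s A B"
    and "k \<le> i" "k \<in> {1..r}" "i \<in> {1..r}" "h \<in> {1..s}" "j \<in> {1..s}"
  shows "fst (A k h) \<le> fst (A i j)"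
  using assms(2,4)
proof (induction i rule: dec_induct)
  case base
  have "fst (A k h) = fst (A k j)"
    using grid assms(3,5,6) unfolding grid_data_def by blast
  then show ?case by simp
next
  case (step i)
  then have "i \<in> {1..<r}"
    using assms(3) by simp
  with step grid_corner_fst_step[OF grid _ assms(6)] show ?case
    by fastforce
qed

lemma grid_corner_snd_mono:
  assumes grid: "grid_data m n r s A B"
    and "h \<le> j" "k \<in> {1..r}" "i \<in> {1..r}" "h \<in> {1..s}" "j \<in> {1..s}"
  shows "snd (A k h) \<le> snd (A i j)"
  using assms(2,6)
proof (induction j rule: dec_induct)
  case base
  have "snd (A k h) = snd (A i h)"
    using grid assms(3,4,5) unfolding grid_data_def by blast
  then show ?case by simp
next
  case (step j)
  then have "j \<in> {1..<s}"
    using assms(5) by simp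
  with step grid_corner_snd_step[OF grid assms(4)] show ?case
    by fastforce
qed

lemma Fset_mono:
  assumes "grid_data m n r s A B"
    and "k \<le> i" "h \<le> j" "k \<in> {1..r}" "i \<in> {1..r}" "h \<in> {1..s}" "j \<in> {1..s}"
  shows "Fset P A k h \<subseteq> Fset P A i j"
  using grid_corner_fst_mono[OF assms(1,2,4-7)] grid_corner_snd_mono[OF assms(1,3,4-7)]
  unfolding Fset_def by auto

lemma Fset_Int:
  assumes grid: "grid_data m n r s A B"
    and "k \<in> {1..r}" "k' \<in> {1..r}" "h \<in> {1..s}" "h' \<in> {1..s}"
  shows "Fset P A k h \<inter> Fset P A k' h' = Fset P A (min k k') (min h h')"
proof -
  have "fst (A (min k k') (min h h')) = min (fst (A k h)) (fst (A k' h'))"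
    using grid_corner_fst_mono[OF grid] assms(2-5) by (smt (verit) atLeastAtMost_iff min_def nle_le)
  moreover have "snd (A (min k k') (min h h')) = min (snd (A k h)) (snd (A k' h'))"
    using grid_corner_snd_mono[OF grid] assms(2-5) by (smt (verit) atLeastAtMost_iff min_def nle_le)
  ultimately show ?thesis
    unfolding Fset_def by auto
qed

lemma Fset_Int_closed:
  assumes grid: "grid_data m n r s A B"
    and "X \<in> {Fset P A k h | k h. k \<in> {1..r} \<and> h \<in> {1..s}}"
    and "Y \<in> {Fset P A k h | k h. k \<in> {1..r} \<and> h \<in> {1..s}}"
  shows "X \<inter> Y \<in> {Fset P A k h | k h. k \<in> {1..r} \<and> h \<in> {1..s}}"
proof -
  obtain k h k' h' where X: "X = Fset P A k h" "k \<in> {1..r}" "h \<in> {1..s}"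
    and Y: "Y = Fset P A k' h'" "k' \<in> {1..r}" "h' \<in> {1..s}"
    using assms(2,3) by blast
  then have "X \<inter> Y = Fset P A (min k k') (min h h')"
    using Fset_Int[OF grid] by simp
  moreover have "min k k' \<in> {1..r}" "min h h' \<in> {1..s}"
    using X Y by auto
  ultimately show ?thesis by blast
qed

lemma Union_lower_Fset_subset:
  assumes grid: "grid_data m n r s A B" and ij: "i \<in> {1..r}" "j \<in> {1..s}"
  shows "\<Union>{Fset P A k h | k h. k \<in> {1..i} \<and> h \<in> {1..j} \<and> (k, h) \<noteq> (i, j)} \<subseteq> Fset P A i j"
proof (rule Union_least)
  fix X assume "X \<in> {Fset P A k h | k h. k \<in> {1..i} \<and> h \<in> {1..j} \<and> (k, h) \<noteq> (i, j)}"
  then obtain k h where "X = Fset P A k h" "k \<in> {1..i}" "h \<in> {1..j}"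
    by blast
  then show "X \<subseteq> Fset P A i j"
    using ij by (simp add: Fset_mono[OF grid])
qed

lemma degree_in_Lset_eq:
  assumes grid: "grid_data m n r s A B" and ij: "i \<in> {1..r}" "j \<in> {1..s}"
    and agree: "\<And>k h. k \<in> {1..r} \<Longrightarrow> h \<in> {1..s} \<Longrightarrow>
      degree_in u (Fset P A k h) = degree_in w (Fset P A k h)"
  shows "degree_in u (Lset P A i j) = degree_in w (Lset P A i j)"
proof -
  define \<F> where "\<F> = {Fset P A k h | k h. k \<in> {1..r} \<and> h \<in> {1..s}}"
  define \<D> where "\<D> = {Fset P A k h | k h. k \<in> {1..i} \<and> h \<in> {1..j} \<and> (k, h) \<noteq> (i, j)}"
  have "degree_in u (\<Union>\<D>) = degree_in w (\<Union>\<D>)"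
  proof (rule modular_eq_on_finite_Union[where \<F> = \<F>])
    show "degree_in u X = degree_in w X" if "X \<in> \<F>" for X
      using that agree unfolding \<F>_def by blast
    show "X \<inter> Y \<in> \<F>" if "X \<in> \<F>" "Y \<in> \<F>" for X Y
      using Fset_Int_closed[OF grid] that unfolding \<F>_def by blast
    show "finite \<D>"
      unfolding \<D>_def by (rule finite_subset[of _ "(\<lambda>(k, h). Fset P A k h) ` ({1..i} \<times> {1..j})"]) auto
    have "{1..i} \<subseteq> {1..r}" "{1..j} \<subseteq> {1..s}"
      using ij by auto
    then show "\<D> \<subseteq> \<F>"
      unfolding \<D>_def \<F>_def by blast
  qed (simp_all add: degree_in_union_inter)
  then show ?thesis
    using agree[OF ij] Union_lower_Fset_subset[OF grid ij]
    by (simp only: Lset_def \<D>_def degree_in_diff)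
qed

theorem lemma4p3:
  fixes m n r s :: nat
    and A B :: "nat \<Rightarrow> nat \<Rightarrow> nat \<times> nat"
    and fp fm :: "'k::field vpoly"
    and i j :: nat
    and v :: "nat \<times> nat"
  defines "P \<equiv> grid_polyomino m n r s A B"
  assumes grid: "grid_data m n r s A B"
    and binom: "\<exists>u w. fp = monom u \<and> fm = monom w"
    and inJ: "fp - fm \<in> toric_ideal r s P A"
    and ij: "i \<in> {1..r}" "j \<in> {1..s}"
    and vplus: "v \<in> poly_vertices P" "var v dvd fp"
    and vL: "v \<in> Lset P A i j"
  shows "\<exists>v'. v' \<in> poly_vertices P \<and> var v' dvd fm \<and> v' \<in> Lset P A i j"
proof -
  obtain u w where uw: "fp = monom u" "fm = monom w"
    using binom by blast
  have "degree_in u (Fset P A k h) = degree_in w (Fset P A k h)"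
    if "k \<in> {1..r}" "h \<in> {1..s}" for k h
    using inJ that unfolding uw by (rule toric_binomial_degree_in_Fset_eq)
  then have L_eq: "degree_in u (Lset P A i j) = degree_in w (Lset P A i j)"
    by (rule degree_in_Lset_eq[OF grid ij])
  have "v \<in> Poly_Mapping.keys u"
    using vplus(2) uw by (simp add: var_dvd_monom_iff)
  then have "0 < degree_in u (Lset P A i j)"
    unfolding degree_in_pos_iff using vL by blast
  then obtain v' where v'w: "v' \<in> Poly_Mapping.keys w" and v'L: "v' \<in> Lset P A i j"
    unfolding L_eq degree_in_pos_iff by blast
  have "v' \<in> poly_vertices P"
    using v'L by (simp add: Lset_def Fset_def)
  moreover have "var v' dvd fm"
    using v'w uw by (simp add: var_dvd_monom_iff)
  ultimately show ?thesis
    using v'L by blast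
qed

end
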